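(* Let $k\ge3$, $d$ a positive integer, $\alpha=d/k$, $\beta>0$, $\lambda\in(0,1)$, and let $\eta_0$ be a probability measure on $[0,1]$ with $\eta_0(\mathrm dx)=\eta_0(\mathrm d(1-x))$. For any literals $\underline{\mathtt L}_a\in\{0,1\}^k$, $0\le a\le d$, the quantity $$\mathcal P\big(\delta_{\eta_0},\lambda;(\underline{\mathtt L}_a)_{0\le a\le d}\big):=\lambda^{-1}\log\mathbb E'\Big(\sum_{x\in\{0,1\}}\prod_{a=1}^d u_{a,\underline{\mathtt L}_a}(x)\Big)^{\lambda}-(k-1)\alpha\lambda^{-1}\log\mathbb E'\big(u_{\underline{\mathtt L}_0}\big)^{\lambda}$$ does not depend on $(\underline{\mathtt L}_a)_{0\le a\le d}$. Consequently, its average over $(\underline{\mathtt L}_a)_{0\le a\le d}$ i.i.d. uniform on $\{0,1\}^k$ equals its value at $\underline{\mathtt L}_a\equiv\underline 0$.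
   Context: Identify a probability measure $\rho$ on $\{0,1\}$ with $\rho(1)\in[0,1]$. Let $(\rho_{a,j})_{a\ge0,j\ge1}$ be i.i.d. samples from $\eta_0$, and $\mathbb E'$ the expectation over them. For $\underline{\mathtt L}\in\{0,1\}^k$ and $\underline x\in\{0,1\}^k$, $\theta_{\underline{\mathtt L}}(\underline x)=(1-e^{-\beta})\big(\prod_{i=1}^k(\mathtt L_i\oplus x_i)+\prod_{i=1}^k(\mathtt L_i\oplus x_i\oplus1)\big)$. For $x\in\{0,1\}$: $u_{a,\underline{\mathtt L}}(x)=\sum_{\underline x\in\{0,1\}^k}\mathbb 1\{x_1=x\}(1-\theta_{\underline{\mathtt L}}(\underline x))\prod_{j=2}^k\rho_{a,j}(x_j)$ and $u_{\underline{\mathtt L}}=\sum_{\underline x\in\{0,1\}^k}(1-\theta_{\underline{\mathtt L}}(\underline x))\prod_{j=1}^k\rho_{0,j}(x_j)$. *)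

theory Defs
  imports "HOL-Probability.Probability"
begin

text \<open>Binary values \{0,1\} are encoded as bool (False = 0, True = 1); xor is inequality.
  A sample r in [0,1] stands for the probability measure rho on \{0,1\} with rho(1) = r.\<close>

definition rho_pm :: "real \<Rightarrow> bool \<Rightarrow> real" where
  "rho_pm r x = (if x then r else 1 - r)"

definition cube :: "nat \<Rightarrow> (nat \<Rightarrow> bool) set" where
  "cube k = PiE {1..k} (\<lambda>_. UNIV)"

definition theta :: "nat \<Rightarrow> real \<Rightarrow> (nat \<Rightarrow> bool) \<Rightarrow> (nat \<Rightarrow> bool) \<Rightarrow> real" where
  "theta k \<beta> L x = (1 - exp (-\<beta>)) *
     ((\<Prod>i\<in>{1..k}. of_bool (L i \<noteq> x i)) + (\<Prod>i\<in>{1..k}. of_bool (L i = x i)))"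

text \<open>u_{a,L}(x); the samples are rho :: nat \<times> nat \<Rightarrow> real, rho (a,j) = rho_{a,j}(1).\<close>
definition u_aL :: "nat \<Rightarrow> real \<Rightarrow> (nat \<times> nat \<Rightarrow> real) \<Rightarrow> nat \<Rightarrow> (nat \<Rightarrow> bool) \<Rightarrow> bool \<Rightarrow> real" where
  "u_aL k \<beta> \<rho> a L x = (\<Sum>xs\<in>cube k. of_bool (xs 1 = x) * (1 - theta k \<beta> L xs) *
       (\<Prod>j\<in>{2..k}. rho_pm (\<rho> (a, j)) (xs j)))"

definition u_L :: "nat \<Rightarrow> real \<Rightarrow> (nat \<times> nat \<Rightarrow> real) \<Rightarrow> (nat \<Rightarrow> bool) \<Rightarrow> real" where
  "u_L k \<beta> \<rho> L = (\<Sum>xs\<in>cube k. (1 - theta k \<beta> L xs) *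
       (\<Prod>j\<in>{1..k}. rho_pm (\<rho> (0, j)) (xs j)))"

definition samples :: "nat \<Rightarrow> nat \<Rightarrow> real measure \<Rightarrow> (nat \<times> nat \<Rightarrow> real) measure" where
  "samples k d \<eta>0 = PiM ({0..d} \<times> {1..k}) (\<lambda>_. \<eta>0)"

definition Pfun :: "nat \<Rightarrow> nat \<Rightarrow> real \<Rightarrow> real \<Rightarrow> real measure \<Rightarrow> (nat \<Rightarrow> nat \<Rightarrow> bool) \<Rightarrow> real" where
  "Pfun k d \<beta> lam \<eta>0 L =
     ln (\<integral>\<rho>. (\<Sum>x\<in>UNIV. \<Prod>a\<in>{1..d}. u_aL k \<beta> \<rho> a (L a) x) powr lam \<partial>samples k d \<eta>0) / lam
     - real (k - 1) * (real d / real k) / lam *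
       ln (\<integral>\<rho>. (u_L k \<beta> \<rho> (L 0)) powr lam \<partial>samples k d \<eta>0)"

end

theory Submission
  imports Defs
begin

text \<open>Replacing the cube variable x by x xor L (and, in u_aL, by x xor L xor L_1, which keeps
  x_1) turns theta_L into theta_0, because theta only sees the pattern L xor x up to global
  complement. The product weights then change only by rho_{a,j} being replaced by 1 - rho_{a,j}
  at the flipped coordinates, and by the symmetry of eta_0 this coordinatewise reflection
  preserves the law of the i.i.d. samples. Hence both expectations in P do not depend on the
  literals. Beyond the symmetry of eta_0 (and eta_0 being a Borel probability measure) the
  argument only needs k \<ge> 1.\<close>

lemma sum_cube_xor:
  "(\<Sum>xs\<in>cube k. f (\<lambda>i\<in>{1..k}. xs i \<noteq> M i)) = (\<Sum>xs\<in>cube k. f xs)"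
  by (rule sum.reindex_bij_witness[where i="\<lambda>xs. \<lambda>i\<in>{1..k}. xs i \<noteq> M i"
                                      and j="\<lambda>xs. \<lambda>i\<in>{1..k}. xs i \<noteq> M i"])
     (auto simp: cube_def PiE_def extensional_def fun_eq_iff)

lemma theta_pattern_eq:
  assumes pattern: "\<And>i. i \<in> {1..k} \<Longrightarrow> (L' i \<noteq> x' i) = (c \<noteq> (L i \<noteq> x i))"
  shows "theta k \<beta> L' x' = theta k \<beta> L x"
proof -
  have ne: "(\<Prod>i\<in>{1..k}. of_bool (L' i \<noteq> x' i) :: real) = (\<Prod>i\<in>{1..k}. of_bool (c \<noteq> (L i \<noteq> x i)))"
    using pattern by (intro prod.cong refl arg_cong[of _ _ of_bool])
  have eq: "(\<Prod>i\<in>{1..k}. of_bool (L' i = x' i) :: real) = (\<Prod>i\<in>{1..k}. of_bool (c = (L i \<noteq> x i)))"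
    using pattern by (intro prod.cong refl arg_cong[of _ _ of_bool]) blast
  show ?thesis
    unfolding theta_def ne eq by (cases c) (simp_all add: add.commute)
qed

lemma u_aL_normalize:
  assumes "k \<ge> 1"
    and "\<And>j. j \<in> {2..k} \<Longrightarrow> \<rho>' (a, j) = (if L j \<noteq> L 1 then 1 - \<rho> (a, j) else \<rho> (a, j))"
  shows "u_aL k \<beta> \<rho> a L x = u_aL k \<beta> \<rho>' a (\<lambda>_. False) x"
proof -
  let ?flip = "\<lambda>xs. \<lambda>i\<in>{1..k}. xs i \<noteq> (L i \<noteq> L 1)"
  have theta: "theta k \<beta> (\<lambda>_. False) (?flip xs) = theta k \<beta> L xs" for xs
    by (rule theta_pattern_eq[where c = "L 1"]) auto
  have weights: "(\<Prod>j\<in>{2..k}. rho_pm (\<rho>' (a, j)) (?flip xs j)) = (\<Prod>j\<in>{2..k}. rho_pm (\<rho> (a, j)) (xs j))" for xs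
    using assms(2) by (intro prod.cong) (auto simp: rho_pm_def)
  have "u_aL k \<beta> \<rho>' a (\<lambda>_. False) x
      = (\<Sum>xs\<in>cube k. of_bool (?flip xs 1 = x) * (1 - theta k \<beta> (\<lambda>_. False) (?flip xs)) *
           (\<Prod>j\<in>{2..k}. rho_pm (\<rho>' (a, j)) (?flip xs j)))"
    unfolding u_aL_def by (rule sum_cube_xor [symmetric])
  also have "\<dots> = u_aL k \<beta> \<rho> a L x"
    unfolding u_aL_def theta weights using assms(1) by simp
  finally show ?thesis ..
qed

lemma u_L_normalize:
  assumes "\<And>j. j \<in> {1..k} \<Longrightarrow> \<rho>' (0, j) = (if L j then 1 - \<rho> (0, j) else \<rho> (0, j))"
  shows "u_L k \<beta> \<rho> L = u_L k \<beta> \<rho>' (\<lambda>_. False)"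
proof -
  let ?flip = "\<lambda>xs. \<lambda>i\<in>{1..k}. xs i \<noteq> L i"
  have theta: "theta k \<beta> (\<lambda>_. False) (?flip xs) = theta k \<beta> L xs" for xs
    by (rule theta_pattern_eq[where c = False]) auto
  have weights: "(\<Prod>j\<in>{1..k}. rho_pm (\<rho>' (0, j)) (?flip xs j)) = (\<Prod>j\<in>{1..k}. rho_pm (\<rho> (0, j)) (xs j))" for xs
    using assms by (intro prod.cong) (auto simp: rho_pm_def)
  have "u_L k \<beta> \<rho>' (\<lambda>_. False)
      = (\<Sum>xs\<in>cube k. (1 - theta k \<beta> (\<lambda>_. False) (?flip xs)) *
           (\<Prod>j\<in>{1..k}. rho_pm (\<rho>' (0, j)) (?flip xs j)))"
    unfolding u_L_def by (rule sum_cube_xor [symmetric])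
  also have "\<dots> = u_L k \<beta> \<rho> L"
    unfolding u_L_def theta weights ..
  finally show ?thesis ..
qed

lemma distr_PiM_componentwise:
  assumes "finite I" and "\<And>i. prob_space (M i)"
    and [measurable]: "\<And>i. i \<in> I \<Longrightarrow> g i \<in> M i \<rightarrow>\<^sub>M M i"
    and preserving: "\<And>i. i \<in> I \<Longrightarrow> distr (M i) (M i) (g i) = M i"
  shows "distr (PiM I M) (PiM I M) (\<lambda>x. \<lambda>i\<in>I. g i (x i)) = PiM I M"
proof -
  interpret product_prob_space M
    by (intro product_prob_spaceI) fact
  let ?g = "\<lambda>x. \<lambda>i\<in>I. g i (x i)"
  have g_measurable: "?g \<in> PiM I M \<rightarrow>\<^sub>M PiM I M"
    by measurable
  show ?thesis
  proof (rule PiM_eqI[OF \<open>finite I\<close>])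
    fix A assume A: "\<And>i. i \<in> I \<Longrightarrow> A i \<in> sets (M i)"
    have "emeasure (distr (PiM I M) (PiM I M) ?g) (PiE I A)
        = emeasure (PiM I M) (?g -` PiE I A \<inter> space (PiM I M))"
      using A g_measurable by (intro emeasure_distr) (auto intro: sets_PiM_I_finite \<open>finite I\<close>)
    also have "?g -` PiE I A \<inter> space (PiM I M) = PiE I (\<lambda>i. g i -` A i \<inter> space (M i))"
      by (auto simp: space_PiM PiE_def Pi_def extensional_def)
    also have "emeasure (PiM I M) \<dots> = (\<Prod>i\<in>I. emeasure (M i) (g i -` A i \<inter> space (M i)))"
      using A by (intro emeasure_PiM \<open>finite I\<close>) (auto intro: measurable_sets)
    also have "\<dots> = (\<Prod>i\<in>I. emeasure (distr (M i) (M i) (g i)) (A i))"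
      using A by (intro prod.cong emeasure_distr [symmetric]) auto
    also have "\<dots> = (\<Prod>i\<in>I. emeasure (M i) (A i))"
      using preserving by simp
    finally show "emeasure (distr (PiM I M) (PiM I M) ?g) (PiE I A) = (\<Prod>i\<in>I. emeasure (M i) (A i))" .
  qed simp
qed

lemma integral_PiM_reflect:
  fixes \<eta>0 :: "real measure" and f :: "('i \<Rightarrow> real) \<Rightarrow> real"
  assumes "prob_space \<eta>0" and sets_\<eta>0: "sets \<eta>0 = sets borel"
    and symmetric: "distr \<eta>0 borel (\<lambda>x. 1 - x) = \<eta>0" and "finite I"
    and f: "f \<in> borel_measurable (PiM I (\<lambda>_. \<eta>0))"
  shows "(\<integral>\<rho>. f (\<lambda>i\<in>I. if F i then 1 - \<rho> i else \<rho> i) \<partial>PiM I (\<lambda>_. \<eta>0)) = integral\<^sup>L (PiM I (\<lambda>_. \<eta>0)) f"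
proof -
  define g where "g i = (if F i then (\<lambda>x::real. 1 - x) else (\<lambda>x. x))" for i
  have g_measurable [measurable]: "g i \<in> \<eta>0 \<rightarrow>\<^sub>M \<eta>0" for i
    unfolding g_def using measurable_cong_sets[OF sets_\<eta>0 sets_\<eta>0] by auto
  have "distr \<eta>0 \<eta>0 (\<lambda>x. 1 - x) = \<eta>0"
    using symmetric by (metis sets_\<eta>0 distr_cong)
  then have "distr \<eta>0 \<eta>0 (g i) = \<eta>0" for i
    by (simp add: g_def distr_id2)
  then have preserving: "distr (PiM I (\<lambda>_. \<eta>0)) (PiM I (\<lambda>_. \<eta>0)) (\<lambda>\<rho>. \<lambda>i\<in>I. g i (\<rho> i)) = PiM I (\<lambda>_. \<eta>0)"
    using assms by (intro distr_PiM_componentwise) auto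
  have "(\<integral>\<rho>. f (\<lambda>i\<in>I. if F i then 1 - \<rho> i else \<rho> i) \<partial>PiM I (\<lambda>_. \<eta>0))
      = (\<integral>\<rho>. f (\<lambda>i\<in>I. g i (\<rho> i)) \<partial>PiM I (\<lambda>_. \<eta>0))"
    by (intro Bochner_Integration.integral_cong refl arg_cong[where f=f]) (auto simp: g_def)
  also have "\<dots> = integral\<^sup>L (distr (PiM I (\<lambda>_. \<eta>0)) (PiM I (\<lambda>_. \<eta>0)) (\<lambda>\<rho>. \<lambda>i\<in>I. g i (\<rho> i))) f"
    using f by (intro integral_distr [symmetric]) measurable
  finally show ?thesis
    unfolding preserving .
qed

text \<open>Off I the component is constantly undefined, so the measurability prover can handle the
  integrands of P without knowing that their indices lie in \{0..d\} \<times> \{1..k\}.\<close>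

lemma measurable_PiM_component_borel [measurable]:
  fixes N :: "real measure"
  assumes "sets N = sets borel"
  shows "(\<lambda>x. x i) \<in> borel_measurable (PiM I (\<lambda>_. N))"
proof (cases "i \<in> I")
  case True
  then show ?thesis
    using measurable_component_singleton[OF True, of "\<lambda>_. N"] measurable_cong_sets[OF refl assms] by metis
next
  case False
  then have "x i = undefined" if "x \<in> space (PiM I (\<lambda>_. N))" for x
    using that by (auto simp: space_PiM PiE_def extensional_def)
  then show ?thesis
    by (subst measurable_cong[where g="\<lambda>_. undefined"]) auto
qed

lemma Pfun_eq_Pfun_zero_literals:
  fixes \<eta>0 :: "real measure"
  assumes "k \<ge> 1" and "prob_space \<eta>0" and "sets \<eta>0 = sets borel"
    and "distr \<eta>0 borel (\<lambda>x. 1 - x) = \<eta>0"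
  shows "Pfun k d \<beta> lam \<eta>0 L = Pfun k d \<beta> lam \<eta>0 (\<lambda>a i. False)"
proof -
  let ?I = "{0..d} \<times> {1..k}"
  have samples: "samples k d \<eta>0 = PiM ?I (\<lambda>_. \<eta>0)"
    by (simp add: samples_def)
  have first:
    "(\<integral>\<rho>. (\<Sum>x\<in>UNIV. \<Prod>a\<in>{1..d}. u_aL k \<beta> \<rho> a (L a) x) powr lam \<partial>samples k d \<eta>0)
   = (\<integral>\<rho>. (\<Sum>x\<in>UNIV. \<Prod>a\<in>{1..d}. u_aL k \<beta> \<rho> a (\<lambda>_. False) x) powr lam \<partial>samples k d \<eta>0)"
    (is "?lhs = ?rhs")
  proof -
    have "?lhs = (\<integral>\<rho>. (\<Sum>x\<in>UNIV. \<Prod>a\<in>{1..d}. u_aL k \<beta>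
                  (\<lambda>i\<in>?I. if L (fst i) (snd i) \<noteq> L (fst i) 1 then 1 - \<rho> i else \<rho> i) a (\<lambda>_. False) x)
                powr lam \<partial>samples k d \<eta>0)"
      by (intro Bochner_Integration.integral_cong refl arg_cong[where f="\<lambda>t. t powr lam"]
            sum.cong prod.cong u_aL_normalize \<open>k \<ge> 1\<close>) auto
    also have "\<dots> = ?rhs"
      unfolding samples using assms
      by (intro integral_PiM_reflect) (auto simp: u_aL_def rho_pm_def)
    finally show ?thesis .
  qed
  have second:
    "(\<integral>\<rho>. u_L k \<beta> \<rho> (L 0) powr lam \<partial>samples k d \<eta>0)
   = (\<integral>\<rho>. u_L k \<beta> \<rho> (\<lambda>_. False) powr lam \<partial>samples k d \<eta>0)"
    (is "?lhs = ?rhs")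
  proof -
    have "?lhs = (\<integral>\<rho>. u_L k \<beta> (\<lambda>i\<in>?I. if L 0 (snd i) then 1 - \<rho> i else \<rho> i) (\<lambda>_. False) powr lam
                   \<partial>samples k d \<eta>0)"
      by (intro Bochner_Integration.integral_cong refl arg_cong[where f="\<lambda>t. t powr lam"] u_L_normalize) auto
    also have "\<dots> = ?rhs"
      unfolding samples using assms
      by (intro integral_PiM_reflect) (auto simp: u_L_def rho_pm_def)
    finally show ?thesis .
  qed
  show ?thesis
    unfolding Pfun_def first second ..
qed

lemma card_literal_families: "card (PiE {0..d} (\<lambda>_. cube k)) = 2 ^ (k * (d + 1))"
  by (simp add: card_PiE cube_def power_mult power_add)

theorem lemma2p3:
  fixes k d :: nat and \<beta> lam :: real and \<eta>0 :: "real measure"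
  assumes "k \<ge> 3" and "d \<ge> 1" and "\<beta> > 0" and "0 < lam" and "lam < 1"
    and "prob_space \<eta>0" and "sets \<eta>0 = sets borel" and "measure \<eta>0 {0..1} = 1"
    and "distr \<eta>0 borel (\<lambda>x. 1 - x) = \<eta>0"
  shows "(\<forall>L L'. Pfun k d \<beta> lam \<eta>0 L = Pfun k d \<beta> lam \<eta>0 L') \<and>
         (\<Sum>L\<in>PiE {0..d} (\<lambda>_. cube k). Pfun k d \<beta> lam \<eta>0 L) / 2 ^ (k * (d + 1))
           = Pfun k d \<beta> lam \<eta>0 (\<lambda>a i. False)"
proof -
  have independent: "Pfun k d \<beta> lam \<eta>0 L = Pfun k d \<beta> lam \<eta>0 (\<lambda>a i. False)" for L
    using assms by (intro Pfun_eq_Pfun_zero_literals) auto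
  have "(\<Sum>L\<in>PiE {0..d} (\<lambda>_. cube k). Pfun k d \<beta> lam \<eta>0 L)
      = (\<Sum>L\<in>PiE {0..d} (\<lambda>_. cube k). Pfun k d \<beta> lam \<eta>0 (\<lambda>a i. False))"
    using independent by (rule sum.cong[OF refl])
  also have "\<dots> = 2 ^ (k * (d + 1)) * Pfun k d \<beta> lam \<eta>0 (\<lambda>a i. False)"
    by (simp add: card_literal_families)
  finally show ?thesis
    using independent by (metis nonzero_mult_div_cancel_left power_not_zero zero_neq_numeral)
qed

end
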